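(* Let $\nu$ be an antinorm on $\mathbb{R}^n$ and $U_\nu=\{\xi\in\mathbb{R}^n:\nu(\xi)\ge1\}$. Then (1) $U_\nu$ is a nonempty closed convex set; (2) $\lambda U_\nu\subset U_\nu$ for every $\lambda\ge1$; (3) $0\notin U_\nu$. Conversely, if $U\subset\mathbb{R}^n$ satisfies (1)–(3), then $\nu_U=\operatorname{cl}\mathring\nu_U$, where $\mathring\nu_U(\xi)=\sup\{\lambda>0:\xi\in\lambda U\}$ (with $\sup\varnothing=-\infty$), is an antinorm. Moreover, the maps $\nu\mapsto U_\nu$ and $U\mapsto\nu_U$ are mutually inverse: $\nu_{U_\nu}=\nu$ and $U_{\nu_U}=U$.
   Context: An antinorm on $\mathbb{R}^n$ is a function $\nu:\mathbb{R}^n\to\mathbb{R}\cup\{-\infty\}$ such that: $\nu$ is concave and closed (its hypograph is closed, i.e. $\nu$ is upper semicontinuous); $\nu(\lambda\xi)=\lambda\nu(\xi)$ for all $\lambda\ge0$, $\xi\in\mathbb{R}^n$; $\operatorname{dom}\nu=\{\xi:\nu(\xi)\neq-\infty\}\neq\varnothing$ and $\nu(\xi)>0$ for every $\xi$ in the relative interior of $\operatorname{dom}\nu$. For a concave function $g$, $\operatorname{cl}g$ denotes its closure, $(\operatorname{cl}g)(\xi)=\limsup_{\eta\to\xi}g(\eta)$. *)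

theory Defs
  imports "HOL-Analysis.Analysis" "HOL-Library.Extended_Real"
begin

text \<open>Functions with values in \<open>\<real> \<union> {-\<infinity>}\<close> are modelled as \<open>ereal\<close>-valued
  functions that never take the value \<open>\<infinity>\<close>.\<close>

definition hypo :: "('a::real_vector \<Rightarrow> ereal) \<Rightarrow> ('a \<times> real) set" where
  "hypo f = {(x, t). ereal t \<le> f x}"

definition edom :: "('a \<Rightarrow> ereal) \<Rightarrow> 'a set" where
  "edom f = {x. f x \<noteq> -\<infinity>}"

text \<open>Closure of a concave function: \<open>(cl g)(x) = limsup_{y\<rightarrow>x} g(y)\<close>
  (upper semicontinuous hull, the limsup including the point itself).\<close>
definition ecl :: "('a::metric_space \<Rightarrow> ereal) \<Rightarrow> 'a \<Rightarrow> ereal" where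
  "ecl g x = (INF e\<in>{e::real. e > 0}. SUP y\<in>ball x e. g y)"

definition antinorm :: "('a::euclidean_space \<Rightarrow> ereal) \<Rightarrow> bool" where
  "antinorm \<nu> \<longleftrightarrow>
     (\<forall>x. \<nu> x \<noteq> \<infinity>) \<and>
     convex (hypo \<nu>) \<and> closed (hypo \<nu>) \<and>
     (\<forall>l x. l \<ge> 0 \<longrightarrow> \<nu> (l *\<^sub>R x) = ereal l * \<nu> x) \<and>
     edom \<nu> \<noteq> {} \<and>
     (\<forall>x\<in>rel_interior (edom \<nu>). \<nu> x > 0)"

definition U_of :: "('a \<Rightarrow> ereal) \<Rightarrow> 'a set" where
  "U_of \<nu> = {x. \<nu> x \<ge> 1}"

definition nu_ring :: "'a::real_vector set \<Rightarrow> 'a \<Rightarrow> ereal" where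
  "nu_ring U x = Sup {ereal l | l. l > 0 \<and> x \<in> (\<lambda>u. l *\<^sub>R u) ` U}"

definition nu_of :: "'a::real_normed_vector set \<Rightarrow> 'a \<Rightarrow> ereal" where
  "nu_of U = ecl (nu_ring U)"

end

theory Submission
  imports Defs
begin

(*
  An upper semicontinuous concave function is determined by its hypograph, a closed convex
  set, and for an antinorm \<nu> this set is a cone; U_of \<nu> is its slice at height 1, which
  gives (1)-(3).

  Conversely, the hypograph of nu_ring U is the cone over U \<times> {1} together with everything
  below it, hence convex.  Because U is closed and stable under scaling by l \<ge> 1, the
  supremum defining nu_ring U is attained, and slicing the closure of this cone at height 1
  gives back U.  Since 0 \<notin> U, nu_ring U x \<le> |x| / dist(0, U), which keeps nu_of U
  finite; positivity on the relative interior of the domain survives the closure because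
  closure does not enlarge the relative interior of a convex set.

  Finally nu_ring (U_of \<nu>) is \<nu> restricted to where \<nu> > 0.  Shrinking towards a
  point over the relative interior of dom \<nu> shows that this part of hypo \<nu> is dense,
  so its closure is \<nu> again.
*)

lemma hypo_iff [simp]: "(x, t) \<in> hypo f \<longleftrightarrow> ereal t \<le> f x"
  by (simp add: hypo_def)

lemma ereal_le_by_real_lower_bounds:
  fixes a b :: ereal
  assumes "\<And>t. ereal t \<le> a \<Longrightarrow> ereal t \<le> b"
  shows "a \<le> b"
proof (rule ccontr)
  assume "\<not> a \<le> b"
  then obtain t where "b < ereal t" "ereal t < a"
    using ereal_dense2 by (metis not_le)
  thus False using assms[of t] by (meson less_imp_le not_le order_trans)
qed

lemma le_if_hypo_subset: "hypo f \<subseteq> hypo g \<Longrightarrow> f x \<le> g x"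
  by (rule ereal_le_by_real_lower_bounds) (auto simp flip: hypo_iff)

lemma hypo_mono: "(\<And>x. g x \<le> h x) \<Longrightarrow> hypo g \<subseteq> hypo h"
  unfolding hypo_def using order_trans by blast

lemma hypo_inject: "hypo f = hypo g \<Longrightarrow> f = g"
  by (intro ext antisym le_if_hypo_subset) simp_all

lemma edom_eq_fst_hypo: "edom f = fst ` hypo f"
proof (rule set_eqI)
  fix x
  have "f x \<noteq> -\<infinity> \<longleftrightarrow> (\<exists>t. ereal t \<le> f x)"
    by (cases "f x") auto
  also have "\<dots> \<longleftrightarrow> x \<in> fst ` hypo f"
  proof
    assume "\<exists>t. ereal t \<le> f x"
    then obtain t where "(x, t) \<in> hypo f" by auto
    thus "x \<in> fst ` hypo f" by (metis fst_conv image_eqI)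
  qed auto
  finally show "x \<in> edom f \<longleftrightarrow> x \<in> fst ` hypo f"
    by (simp add: edom_def)
qed

lemma convex_edom: "convex (hypo f) \<Longrightarrow> convex (edom f)"
  unfolding edom_eq_fst_hypo by (rule convex_linear_image[OF linear_fst])

lemma superlevel_eq_vimage_hypo: "{x. ereal t \<le> f x} = (\<lambda>x. (x, t)) -` hypo f"
  by auto

lemma closed_superlevel: "closed (hypo f) \<Longrightarrow> closed {x. ereal t \<le> f x}"
  unfolding superlevel_eq_vimage_hypo
  by (auto intro!: continuous_closed_vimage continuous_intros)

lemma convex_superlevel:
  assumes "convex (hypo f)"
  shows "convex {x. ereal t \<le> f x}"
proof (rule convexI)
  fix x y and u v :: real
  assume "x \<in> {x. ereal t \<le> f x}" "y \<in> {x. ereal t \<le> f x}" "0 \<le> u" "0 \<le> v" "u + v = 1"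
  hence "u *\<^sub>R (x, t) + v *\<^sub>R (y, t) \<in> hypo f"
    by (intro convexD[OF assms]) simp_all
  thus "u *\<^sub>R x + v *\<^sub>R y \<in> {x. ereal t \<le> f x}"
    using \<open>u + v = 1\<close> by (simp flip: distrib_right)
qed

lemma closed_hypo_continuous:
  "continuous_on UNIV h \<Longrightarrow> closed (hypo (\<lambda>x. ereal (h x)))"
  unfolding hypo_def by (auto intro!: closed_Collect_le continuous_intros
      intro: continuous_on_compose2[of UNIV h] simp: case_prod_unfold)

lemma positively_homogeneous_if_hypo_scaleR:
  assumes scale: "\<And>l p. 0 < l \<Longrightarrow> p \<in> hypo f \<Longrightarrow> l *\<^sub>R p \<in> hypo f"
    and l: "0 < l"
  shows "f (l *\<^sub>R x) = ereal l * f x"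
proof (rule antisym; rule ereal_le_by_real_lower_bounds)
  fix t
  assume "ereal t \<le> f (l *\<^sub>R x)"
  hence "inverse l *\<^sub>R (l *\<^sub>R x, t) \<in> hypo f"
    using l by (intro scale) simp_all
  hence "ereal (t / l) \<le> f x"
    using l by (simp add: divide_inverse mult.commute)
  thus "ereal t \<le> ereal l * f x"
    using l by (cases "f x") (auto simp: field_simps)
next
  fix t
  assume "ereal t \<le> ereal l * f x"
  hence "ereal (t / l) \<le> f x"
    using l by (cases "f x") (auto simp: field_simps)
  hence "l *\<^sub>R (x, t / l) \<in> hypo f"
    using l by (intro scale) simp_all
  thus "ereal t \<le> f (l *\<^sub>R x)"
    using l by simp
qed

lemma ecl_ge: "g x \<le> ecl g x"
  unfolding ecl_def by (rule INF_greatest, rule SUP_upper) auto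

lemma le_SUP_ball_if_in_closure_hypo:
  fixes g :: "'a::real_normed_vector \<Rightarrow> ereal"
  assumes "(x, t) \<in> closure (hypo g)" "0 < e"
  shows "ereal t \<le> (SUP y\<in>ball x e. g y)"
proof (rule ereal_le_epsilon2)
  fix d :: real
  assume "0 < d"
  then obtain y s where ys: "(y, s) \<in> hypo g" "dist (y, s) (x, t) < min e d"
    using assms unfolding closure_approachable by (metis min_less_iff_conj surj_pair)
  have "dist y x < e" "dist s t < d"
    using ys(2) dist_fst_le[of "(y, s)" "(x, t)"] dist_snd_le[of "(y, s)" "(x, t)"] by simp_all
  hence "y \<in> ball x e" "t \<le> s + d"
    by (auto simp: dist_commute dist_real_def)
  hence "ereal t \<le> ereal s + ereal d"
    by simp
  also have "\<dots> \<le> g y + ereal d"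
    using ys(1) by (intro add_right_mono) simp
  also have "\<dots> \<le> (SUP y\<in>ball x e. g y) + ereal d"
    using \<open>y \<in> ball x e\<close> by (intro add_right_mono SUP_upper)
  finally show "ereal t \<le> (SUP y\<in>ball x e. g y) + ereal d" .
qed

lemma in_closure_hypo_if_le_SUP_ball:
  fixes g :: "'a::real_normed_vector \<Rightarrow> ereal"
  assumes le: "\<And>e. 0 < e \<Longrightarrow> ereal t \<le> (SUP y\<in>ball x e. g y)"
  shows "(x, t) \<in> closure (hypo g)"
  unfolding closure_approachable
proof (intro allI impI)
  fix e :: real
  assume "0 < e"
  have "ereal (t - e/2) < ereal t"
    using \<open>0 < e\<close> by simp
  also have "\<dots> \<le> (SUP y\<in>ball x (e/2). g y)"
    using le \<open>0 < e\<close> by simp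
  finally obtain y where y: "y \<in> ball x (e/2)" "ereal (t - e/2) < g y"
    by (auto simp: less_SUP_iff)
  have "dist (y, t - e/2) (x, t) \<le> dist y x + dist (t - e/2) t"
    unfolding dist_Pair_Pair by (rule sqrt_sum_squares_le_sum) simp_all
  also have "\<dots> < e"
    using y \<open>0 < e\<close> by (simp add: dist_commute dist_real_def)
  finally show "\<exists>p\<in>hypo g. dist p (x, t) < e"
    using y(2) by (intro bexI[of _ "(y, t - e/2)"]) simp_all
qed

lemma hypo_ecl:
  fixes g :: "'a::real_normed_vector \<Rightarrow> ereal"
  shows "hypo (ecl g) = closure (hypo g)"
proof (rule set_eqI, clarify)
  fix x t
  have "(x, t) \<in> hypo (ecl g) \<longleftrightarrow> (\<forall>e>0. ereal t \<le> (SUP y\<in>ball x e. g y))"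
    by (simp add: ecl_def le_INF_iff)
  thus "(x, t) \<in> hypo (ecl g) \<longleftrightarrow> (x, t) \<in> closure (hypo g)"
    using le_SUP_ball_if_in_closure_hypo[where g=g] in_closure_hypo_if_le_SUP_ball[where g=g]
    by blast
qed

lemma ecl_least:
  fixes g :: "'a::real_normed_vector \<Rightarrow> ereal"
  assumes "\<And>x. g x \<le> h x" "closed (hypo h)"
  shows "ecl g x \<le> h x"
proof (rule le_if_hypo_subset)
  show "hypo (ecl g) \<subseteq> hypo h"
    unfolding hypo_ecl using assms by (intro closure_minimal hypo_mono)
qed

lemma segment_start_in_closure:
  fixes a b :: "'a::euclidean_space"
  assumes "\<And>u. 0 < u \<Longrightarrow> u < 1 \<Longrightarrow> (1 - u) *\<^sub>R a + u *\<^sub>R b \<in> S"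
  shows "a \<in> closure S"
proof (cases "a = b")
  case True
  have "a \<in> S"
    using assms[of "1/2"] unfolding True scaleR_collapse by simp
  thus ?thesis
    using closure_subset by blast
next
  case False
  have "closure (open_segment a b) \<subseteq> closure S"
    using assms by (intro closure_mono) (auto simp: in_segment)
  thus ?thesis
    using False by auto
qed

lemma rel_interior_edom_ecl:
  fixes g :: "'a::euclidean_space \<Rightarrow> ereal"
  assumes "convex (hypo g)"
  shows "rel_interior (edom (ecl g)) \<subseteq> rel_interior (edom g)"
proof -
  have lower: "edom g \<subseteq> edom (ecl g)"
  proof
    fix x
    assume "x \<in> edom g"
    thus "x \<in> edom (ecl g)"
      using ecl_ge[of g x] by (auto simp: edom_def)
  qed
  have "edom (ecl g) = fst ` closure (hypo g)"
    by (simp add: edom_eq_fst_hypo hypo_ecl)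
  also have "\<dots> \<subseteq> closure (edom g)"
    unfolding edom_eq_fst_hypo
    by (rule image_closure_subset[OF _ closed_closure closure_subset]) (intro continuous_intros)
  finally have upper: "edom (ecl g) \<subseteq> closure (edom g)" .
  have "affine hull closure (edom g) = affine hull edom g"
    by (rule closure_same_affine_hull)
  also have "\<dots> \<subseteq> affine hull edom (ecl g)"
    by (rule hull_mono[OF lower])
  finally have "affine hull edom (ecl g) = affine hull closure (edom g)"
    using hull_mono[OF upper] by (rule antisym[rotated])
  hence "rel_interior (edom (ecl g)) \<subseteq> rel_interior (closure (edom g))"
    using upper by (intro subset_rel_interior)
  thus ?thesis
    using convex_rel_interior_closure[OF convex_edom[OF assms]] by simp
qed

lemma hypo_eq_closure_over_rel_interior:
  fixes f :: "'a::euclidean_space \<Rightarrow> ereal"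
  assumes cv: "convex (hypo f)" and cl: "closed (hypo f)"
  shows "hypo f = closure (hypo f \<inter> {p. fst p \<in> rel_interior (edom f)})"
    (is "_ = closure ?H")
proof
  show "closure ?H \<subseteq> hypo f"
    using cl by (intro closure_minimal) auto
  show "hypo f \<subseteq> closure ?H"
  proof
    fix p
    assume p: "p \<in> hypo f"
    hence x: "fst p \<in> edom f"
      unfolding edom_eq_fst_hypo by (rule imageI)
    then obtain z where z: "z \<in> rel_interior (edom f)"
      using rel_interior_eq_empty[OF convex_edom[OF cv]] by blast
    hence "z \<in> fst ` hypo f"
      using rel_interior_subset edom_eq_fst_hypo by blast
    then obtain c where q: "(z, c) \<in> hypo f"
      by (metis imageE prod.collapse)
    show "p \<in> closure ?H"
    proof (rule segment_start_in_closure)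
      fix u :: real
      assume u: "0 < u" "u < 1"
      have "(1 - u) *\<^sub>R p + u *\<^sub>R (z, c) \<in> hypo f"
        using p q u by (intro convexD[OF cv]) simp_all
      moreover have "fst p - u *\<^sub>R (fst p - z) \<in> rel_interior (edom f)"
        using x closure_subset u
        by (intro rel_interior_closure_convex_shrink[OF convex_edom[OF cv] z]) auto
      moreover have "fst ((1 - u) *\<^sub>R p + u *\<^sub>R (z, c)) = fst p - u *\<^sub>R (fst p - z)"
        by (simp add: algebra_simps)
      ultimately show "(1 - u) *\<^sub>R p + u *\<^sub>R (z, c) \<in> ?H"
        by simp
    qed
  qed
qed

lemma antinorm_zero:
  assumes "antinorm \<nu>"
  shows "\<nu> 0 = 0"
  using assms[unfolded antinorm_def] by (metis ereal_zero_mult scaleR_zero_left order_refl zero_ereal_def)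

lemma antinorm_rel_interior_nonempty:
  assumes "antinorm \<nu>"
  shows "rel_interior (edom \<nu>) \<noteq> {}"
proof -
  have "convex (edom \<nu>)" "edom \<nu> \<noteq> {}"
    using assms convex_edom by (auto simp: antinorm_def)
  thus ?thesis
    by (simp add: rel_interior_eq_empty)
qed

lemma U_of_eq_superlevel: "U_of \<nu> = {x. ereal 1 \<le> \<nu> x}"
  by (simp add: U_of_def one_ereal_def)

lemma U_of_antinorm:
  assumes A: "antinorm \<nu>"
  shows "U_of \<nu> \<noteq> {} \<and> closed (U_of \<nu>) \<and> convex (U_of \<nu>) \<and>
    (\<forall>l\<ge>1. (\<lambda>u. l *\<^sub>R u) ` U_of \<nu> \<subseteq> U_of \<nu>) \<and> 0 \<notin> U_of \<nu>"
proof (intro conjI allI impI)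
  have fin: "\<And>x. \<nu> x \<noteq> \<infinity>" and hom: "\<And>l x. 0 \<le> l \<Longrightarrow> \<nu> (l *\<^sub>R x) = ereal l * \<nu> x"
    using A by (simp_all add: antinorm_def)
  obtain z where "z \<in> rel_interior (edom \<nu>)"
    using antinorm_rel_interior_nonempty[OF A] by blast
  hence "0 < \<nu> z"
    using A by (simp add: antinorm_def)
  then obtain c where c: "\<nu> z = ereal c" "0 < c"
    using fin by (cases "\<nu> z") auto
  have "\<nu> (inverse c *\<^sub>R z) = 1"
    using c hom[of "inverse c" z] by (simp add: one_ereal_def)
  thus "U_of \<nu> \<noteq> {}"
    unfolding U_of_def by (metis empty_Collect_eq order_refl)
  show "closed (U_of \<nu>)"
    using A by (simp add: U_of_eq_superlevel closed_superlevel antinorm_def)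
  show "convex (U_of \<nu>)"
    using A by (simp add: U_of_eq_superlevel convex_superlevel antinorm_def)
  show "0 \<notin> U_of \<nu>"
    by (simp add: U_of_def antinorm_zero[OF A])
  fix l :: real
  assume "1 \<le> l"
  show "(\<lambda>u. l *\<^sub>R u) ` U_of \<nu> \<subseteq> U_of \<nu>"
  proof clarify
    fix u
    assume "u \<in> U_of \<nu>"
    hence "ereal 1 * 1 \<le> ereal l * \<nu> u"
      using \<open>1 \<le> l\<close> by (intro ereal_mult_mono) (auto simp: U_of_def)
    thus "l *\<^sub>R u \<in> U_of \<nu>"
      using \<open>1 \<le> l\<close> hom[of l u] by (simp add: U_of_def one_ereal_def)
  qed
qed

lemma mem_scaleR_image_iff:
  fixes U :: "'a::real_vector set"
  assumes "l \<noteq> 0"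
  shows "x \<in> (\<lambda>u. l *\<^sub>R u) ` U \<longleftrightarrow> inverse l *\<^sub>R x \<in> U"
  using assms by (auto intro: image_eqI[of _ _ "inverse l *\<^sub>R x"])

lemma nu_ring_eq_Sup: "nu_ring U x = Sup {ereal l | l. 0 < l \<and> inverse l *\<^sub>R x \<in> U}"
  unfolding nu_ring_def by (metis (lifting) mem_scaleR_image_iff less_irrefl)

locale antinorm_set =
  fixes U :: "'a::euclidean_space set"
  assumes U_nonempty: "U \<noteq> {}" and closed_U: "closed U" and convex_U: "convex U"
    and scaleR_mem: "\<And>l u. 1 \<le> l \<Longrightarrow> u \<in> U \<Longrightarrow> l *\<^sub>R u \<in> U"
    and zero_notin_U: "0 \<notin> U"
begin

lemma inverse_scaleR_mem_mono:
  assumes "0 < l'" "l' \<le> l" "inverse l *\<^sub>R x \<in> U"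
  shows "inverse l' *\<^sub>R x \<in> U"
proof -
  have "1 \<le> l / l'"
    using assms by simp
  hence "(l / l') *\<^sub>R (inverse l *\<^sub>R x) \<in> U"
    using assms(3) by (rule scaleR_mem)
  thus ?thesis
    using assms by (simp add: field_simps)
qed

lemma infdist_zero_pos: "0 < infdist 0 U"
  using closed_U U_nonempty zero_notin_U by (rule infdist_pos_not_in_closed)

lemma nu_ring_le_norm: "nu_ring U x \<le> ereal (norm x / infdist 0 U)"
  unfolding nu_ring_eq_Sup
proof (rule Sup_least, clarify)
  fix l
  assume l: "0 < l" "inverse l *\<^sub>R x \<in> U"
  have "infdist 0 U \<le> norm (inverse l *\<^sub>R x)"
    using infdist_le[OF l(2), of 0] by simp
  thus "ereal l \<le> ereal (norm x / infdist 0 U)"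
    using l(1) infdist_zero_pos by (simp add: field_simps)
qed

lemma nu_ring_ge_iff:
  assumes t: "0 < t"
  shows "ereal t \<le> nu_ring U x \<longleftrightarrow> inverse t *\<^sub>R x \<in> U"
proof
  assume "inverse t *\<^sub>R x \<in> U"
  thus "ereal t \<le> nu_ring U x"
    using t unfolding nu_ring_eq_Sup by (intro Sup_upper) blast
next
  assume le: "ereal t \<le> nu_ring U x"
  have "{inverse t<..} \<subseteq> (\<lambda>s. s *\<^sub>R x) -` U"
  proof
    fix s
    assume "s \<in> {inverse t<..}"
    hence "inverse t < s"
      by simp
    moreover have "0 < inverse t"
      using t by simp
    ultimately have s: "0 < s" "inverse s < t"
      using less_imp_inverse_less[of "inverse t" s] by (linarith, simp)
    hence "ereal (inverse s) < ereal t"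
      by simp
    hence "ereal (inverse s) < nu_ring U x"
      using le by (rule less_le_trans)
    then obtain l where "ereal (inverse s) < ereal l" "0 < l" "inverse l *\<^sub>R x \<in> U"
      unfolding nu_ring_eq_Sup less_Sup_iff by blast
    hence "inverse (inverse s) *\<^sub>R x \<in> U"
      using s inverse_scaleR_mem_mono[of "inverse s" l x] by simp
    thus "s \<in> (\<lambda>s. s *\<^sub>R x) -` U"
      by simp
  qed
  moreover have "closed ((\<lambda>s::real. s *\<^sub>R x) -` U)"
    using closed_U by (intro continuous_closed_vimage continuous_intros)
  ultimately have "closure {inverse t<..} \<subseteq> (\<lambda>s. s *\<^sub>R x) -` U"
    by (rule closure_minimal)
  thus "inverse t *\<^sub>R x \<in> U"
    by (auto simp: closure_greaterThan)
qed

lemma nu_ring_attained: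
  assumes "nu_ring U x \<noteq> -\<infinity>"
  obtains a where "0 < a" "nu_ring U x = ereal a" "inverse a *\<^sub>R x \<in> U"
proof -
  have "{ereal l | l. 0 < l \<and> inverse l *\<^sub>R x \<in> U} \<noteq> {}"
    using assms unfolding nu_ring_eq_Sup by (metis Sup_empty bot_ereal_def)
  then obtain l where l: "0 < l" "inverse l *\<^sub>R x \<in> U"
    by blast
  hence "ereal l \<le> nu_ring U x"
    by (simp add: nu_ring_ge_iff)
  then obtain a where "nu_ring U x = ereal a" "l \<le> a"
    using nu_ring_le_norm[of x] by (cases "nu_ring U x") auto
  thus ?thesis
    using that l nu_ring_ge_iff[of a x] by simp
qed

lemma nu_ring_pos: "nu_ring U x \<noteq> -\<infinity> \<Longrightarrow> 0 < nu_ring U x"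
  by (erule nu_ring_attained) simp

lemma hypo_nu_ring_scaleR:
  assumes l: "0 < l" and p: "p \<in> hypo (nu_ring U)"
  shows "l *\<^sub>R p \<in> hypo (nu_ring U)"
proof -
  obtain x t where xt: "p = (x, t)"
    by fastforce
  have "nu_ring U x \<noteq> -\<infinity>"
    using p xt by auto
  then obtain a where a: "0 < a" "nu_ring U x = ereal a" "inverse a *\<^sub>R x \<in> U"
    by (rule nu_ring_attained)
  have "inverse (l * a) *\<^sub>R (l *\<^sub>R x) = inverse a *\<^sub>R x"
    using l a(1) by simp
  hence "inverse (l * a) *\<^sub>R (l *\<^sub>R x) \<in> U"
    using a(3) by (simp only:)
  hence "ereal (l * a) \<le> nu_ring U (l *\<^sub>R x)"
    using a l by (simp add: nu_ring_ge_iff)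
  moreover have "l * t \<le> l * a"
    using p xt a l by simp
  ultimately show ?thesis
    using xt by (simp, meson ereal_less_eq(3) order_trans)
qed

lemma convex_hypo_nu_ring: "convex (hypo (nu_ring U))"
proof (rule convexI, clarify)
  fix x s y t and u v :: real
  assume p: "(x, s) \<in> hypo (nu_ring U)" and q: "(y, t) \<in> hypo (nu_ring U)"
    and uv: "0 \<le> u" "0 \<le> v" "u + v = 1"
  have "nu_ring U x \<noteq> -\<infinity>" "nu_ring U y \<noteq> -\<infinity>"
    using p q by auto
  obtain a where a: "0 < a" "nu_ring U x = ereal a" "inverse a *\<^sub>R x \<in> U"
    using nu_ring_attained[OF \<open>nu_ring U x \<noteq> -\<infinity>\<close>] by blast
  obtain b where b: "0 < b" "nu_ring U y = ereal b" "inverse b *\<^sub>R y \<in> U"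
    using nu_ring_attained[OF \<open>nu_ring U y \<noteq> -\<infinity>\<close>] by blast
  define c where "c = u * a + v * b"
  have c: "0 < c"
  proof -
    have "0 < u \<or> 0 < v"
      using uv by linarith
    thus ?thesis
      using a b uv by (auto simp: c_def intro: add_pos_nonneg add_nonneg_pos)
  qed
  have "(u * a / c) *\<^sub>R (inverse a *\<^sub>R x) + (v * b / c) *\<^sub>R (inverse b *\<^sub>R y) \<in> U"
    using a b c uv by (intro convexD[OF convex_U]) (auto simp: c_def add_divide_distrib[symmetric])
  also have "(u * a / c) *\<^sub>R (inverse a *\<^sub>R x) + (v * b / c) *\<^sub>R (inverse b *\<^sub>R y)
      = inverse c *\<^sub>R (u *\<^sub>R x + v *\<^sub>R y)"
    using a b by (simp add: scaleR_add_right field_simps)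
  finally have "ereal c \<le> nu_ring U (u *\<^sub>R x + v *\<^sub>R y)"
    using c nu_ring_ge_iff by blast
  moreover have "u * s + v * t \<le> c"
    unfolding c_def using p q a b uv by (intro add_mono mult_left_mono) auto
  ultimately show "u *\<^sub>R (x, s) + v *\<^sub>R (y, t) \<in> hypo (nu_ring U)"
    by (simp, meson ereal_less_eq(3) order_trans)
qed

lemma hypo_nu_of: "hypo (nu_of U) = closure (hypo (nu_ring U))"
  by (simp add: nu_of_def hypo_ecl)

lemma nu_of_le_norm: "nu_of U x \<le> ereal (norm x / infdist 0 U)"
  unfolding nu_of_def
  using infdist_zero_pos
  by (intro ecl_least nu_ring_le_norm closed_hypo_continuous continuous_intros) auto

lemma nu_of_scaleR:
  assumes "0 < l"
  shows "nu_of U (l *\<^sub>R x) = ereal l * nu_of U x"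
proof (rule positively_homogeneous_if_hypo_scaleR[OF _ assms])
  fix l :: real and p
  assume "0 < l" "p \<in> hypo (nu_of U)"
  hence "l *\<^sub>R p \<in> (*\<^sub>R) l ` closure (hypo (nu_ring U))"
    by (simp add: hypo_nu_of)
  also have "\<dots> = closure ((*\<^sub>R) l ` hypo (nu_ring U))"
    by (rule closure_scaleR)
  also have "\<dots> \<subseteq> hypo (nu_of U)"
    unfolding hypo_nu_of using hypo_nu_ring_scaleR[OF \<open>0 < l\<close>] by (intro closure_mono) blast
  finally show "l *\<^sub>R p \<in> hypo (nu_of U)" .
qed

lemma nu_of_zero: "nu_of U 0 = 0"
proof (rule antisym)
  show "nu_of U 0 \<le> 0"
    using nu_of_le_norm[of 0] by (simp add: zero_ereal_def)
  obtain u where u: "u \<in> U"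
    using U_nonempty by blast
  have "(0, 0) \<in> closure (hypo (nu_ring U))"
  proof (rule segment_start_in_closure)
    fix v :: real
    assume "0 < v" "v < 1"
    hence "ereal v \<le> nu_ring U (v *\<^sub>R u)"
      using u by (simp add: nu_ring_ge_iff)
    thus "(1 - v) *\<^sub>R (0, 0) + v *\<^sub>R (u, 1) \<in> hypo (nu_ring U)"
      by simp
  qed
  thus "0 \<le> nu_of U 0"
    by (simp add: hypo_nu_of[symmetric] zero_ereal_def)
qed

lemma antinorm_nu_of: "antinorm (nu_of U)"
  unfolding antinorm_def
proof (intro conjI allI impI ballI)
  show "nu_of U x \<noteq> \<infinity>" for x
    using nu_of_le_norm[of x] by auto
  show "convex (hypo (nu_of U))"
    unfolding hypo_nu_of by (rule convex_closure[OF convex_hypo_nu_ring])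
  show "closed (hypo (nu_of U))"
    unfolding hypo_nu_of by simp
  show "nu_of U (l *\<^sub>R x) = ereal l * nu_of U x" if "0 \<le> l" for l x
    using that nu_of_scaleR[of l x] by (cases "l = 0") (simp_all add: nu_of_zero)
  have "0 \<in> edom (nu_of U)"
    by (simp add: edom_def nu_of_zero)
  thus "edom (nu_of U) \<noteq> {}"
    by blast
  fix x
  assume "x \<in> rel_interior (edom (nu_of U))"
  hence "x \<in> edom (nu_ring U)"
    using rel_interior_edom_ecl[OF convex_hypo_nu_ring] rel_interior_subset
    unfolding nu_of_def by blast
  hence "0 < nu_ring U x"
    by (simp add: edom_def nu_ring_pos)
  also have "\<dots> \<le> nu_of U x"
    unfolding nu_of_def by (rule ecl_ge)
  finally show "0 < nu_of U x" .
qed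

lemma U_of_nu_of: "U_of (nu_of U) = U"
proof
  show "U \<subseteq> U_of (nu_of U)"
  proof
    fix x
    assume "x \<in> U"
    hence "ereal 1 \<le> nu_ring U x"
      by (simp add: nu_ring_ge_iff)
    also have "\<dots> \<le> nu_of U x"
      unfolding nu_of_def by (rule ecl_ge)
    finally show "x \<in> U_of (nu_of U)"
      by (simp add: U_of_eq_superlevel)
  qed
  show "U_of (nu_of U) \<subseteq> U"
  proof
    fix x
    assume "x \<in> U_of (nu_of U)"
    hence x: "(x, 1) \<in> closure (hypo (nu_ring U))"
      by (simp add: U_of_eq_superlevel flip: hypo_nu_of)
    \<comment> \<open>The threshold 1/2 keeps \<open>inverse (snd p)\<close> continuous on the second part.\<close>
    define A where "A = {p :: 'a \<times> real. snd p \<le> 1/2} \<union>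
      ({p. 1/2 \<le> snd p} \<inter> (\<lambda>p. inverse (snd p) *\<^sub>R fst p) -` U)"
    have "closed A"
      unfolding A_def using closed_U
      by (intro closed_Un closed_Collect_le continuous_closed_preimage continuous_intros) auto
    moreover have "(y, s) \<in> A" if "ereal s \<le> nu_ring U y" for y s
      using that by (cases "s \<le> 1/2") (simp_all add: A_def nu_ring_ge_iff)
    hence "hypo (nu_ring U) \<subseteq> A"
      by (auto simp: hypo_def)
    ultimately have "(x, 1) \<in> A"
      using x closure_minimal by blast
    thus "x \<in> U"
      by (simp add: A_def)
  qed
qed

end

lemma Sup_pos_ereal_le:
  fixes a :: ereal
  assumes "a \<noteq> \<infinity>"
  shows "Sup {ereal l | l. 0 < l \<and> ereal l \<le> a} = (if 0 < a then a else -\<infinity>)"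
proof (cases "0 < a")
  case True
  then obtain r where "a = ereal r" "0 < r"
    using assms by (cases a) auto
  thus ?thesis
    by (auto intro!: antisym Sup_least Sup_upper)
next
  case False
  have "\<not> (0 < l \<and> ereal l \<le> a)" for l
    using False by (metis ereal_less(2) less_le_trans)
  hence "{ereal l | l. 0 < l \<and> ereal l \<le> a} = {}"
    by blast
  thus ?thesis
    using False by (metis Sup_empty bot_ereal_def)
qed

lemma nu_ring_U_of:
  assumes A: "antinorm \<nu>"
  shows "nu_ring (U_of \<nu>) x = (if 0 < \<nu> x then \<nu> x else -\<infinity>)"
proof -
  have fin: "\<nu> x \<noteq> \<infinity>" and hom: "\<And>l. 0 \<le> l \<Longrightarrow> \<nu> (l *\<^sub>R x) = ereal l * \<nu> x"
    using A by (simp_all add: antinorm_def)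
  have "inverse l *\<^sub>R x \<in> U_of \<nu> \<longleftrightarrow> ereal l \<le> \<nu> x" if "0 < l" for l
    using that fin hom[of "inverse l"] by (cases "\<nu> x") (auto simp: U_of_def field_simps)
  hence "{ereal l | l. 0 < l \<and> inverse l *\<^sub>R x \<in> U_of \<nu>} = {ereal l | l. 0 < l \<and> ereal l \<le> \<nu> x}"
    by blast
  thus ?thesis
    using Sup_pos_ereal_le[OF fin] by (simp add: nu_ring_eq_Sup)
qed

lemma nu_of_U_of:
  assumes A: "antinorm \<nu>"
  shows "nu_of (U_of \<nu>) = \<nu>"
proof (rule hypo_inject)
  have cv: "convex (hypo \<nu>)" and cl: "closed (hypo \<nu>)"
    and pos: "\<And>x. x \<in> rel_interior (edom \<nu>) \<Longrightarrow> 0 < \<nu> x"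
    using A by (simp_all add: antinorm_def)
  have "hypo \<nu> \<inter> {p. fst p \<in> rel_interior (edom \<nu>)} \<subseteq> hypo (nu_ring (U_of \<nu>))"
    using pos by (auto simp: nu_ring_U_of[OF A])
  hence "hypo \<nu> \<subseteq> closure (hypo (nu_ring (U_of \<nu>)))"
    by (subst hypo_eq_closure_over_rel_interior[OF cv cl]) (rule closure_mono)
  moreover have "closure (hypo (nu_ring (U_of \<nu>))) \<subseteq> hypo \<nu>"
    using cl by (intro closure_minimal hypo_mono) (simp add: nu_ring_U_of[OF A])
  ultimately show "hypo (nu_of (U_of \<nu>)) = hypo \<nu>"
    by (simp add: nu_of_def hypo_ecl)
qed

theorem lemma1:
  fixes dummy :: "real ^ 'n"
  shows
   "(\<forall>\<nu> :: real ^ 'n \<Rightarrow> ereal. antinorm \<nu> \<longrightarrow>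
        U_of \<nu> \<noteq> {} \<and> closed (U_of \<nu>) \<and> convex (U_of \<nu>) \<and>
        (\<forall>l\<ge>1. (\<lambda>u. l *\<^sub>R u) ` U_of \<nu> \<subseteq> U_of \<nu>) \<and> 0 \<notin> U_of \<nu>)
    \<and> (\<forall>U :: (real ^ 'n) set.
        U \<noteq> {} \<and> closed U \<and> convex U \<and> (\<forall>l\<ge>1. (\<lambda>u. l *\<^sub>R u) ` U \<subseteq> U) \<and> 0 \<notin> U
        \<longrightarrow> antinorm (nu_of U) \<and> U_of (nu_of U) = U)
    \<and> (\<forall>\<nu> :: real ^ 'n \<Rightarrow> ereal. antinorm \<nu> \<longrightarrow> nu_of (U_of \<nu>) = \<nu>)"
proof (intro conjI allI impI)
  fix U :: "(real ^ 'n) set"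
  assume "U \<noteq> {} \<and> closed U \<and> convex U \<and> (\<forall>l\<ge>1. (\<lambda>u. l *\<^sub>R u) ` U \<subseteq> U) \<and> 0 \<notin> U"
  hence "antinorm_set U"
    by unfold_locales blast+
  thus "antinorm (nu_of U)" "U_of (nu_of U) = U"
    by (simp_all add: antinorm_set.antinorm_nu_of antinorm_set.U_of_nu_of)
qed (simp_all add: U_of_antinorm nu_of_U_of)

end
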